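(* Let $P(z)=\sum_{k=0}^mc_ke^{\alpha_kz}$ with $c_k\ge0$, $\alpha_k\in\mathbb{R}$ and $\max_k|\alpha_k|\le\omega$, where $\omega>0$. Then for every $t\in\mathbb{R}$ and every $\tau\in\mathbb{C}$ with $|\tau-t|\le\frac{1}{5\omega}$, \[ \tfrac34P(t)\le|P(\tau)|\le\tfrac54P(t). \]
   Context: Such $P$ is called an exponential polynomial with real exponents of width at most $\omega$. *)

theory Defs
  imports "HOL-Analysis.Analysis"
begin

end

theory Submission
  imports Defs
begin

(* Each term moves by c_k e^(alpha_k t) (e^(alpha_k (tau - t)) - 1), and
   |e^w - 1| <= e^|w| - 1 <= e^(1/5) - 1 <= 1/4 once |alpha_k (tau - t)| <= 1/5.
   Since the weights c_k e^(alpha_k t) are nonnegative and add up to P(t), this gives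
   |P(tau) - P(t)| <= P(t)/4, and the triangle inequality does the rest. *)

lemma norm_exp_minus_one_le:
  fixes z :: "'a::{real_normed_field,banach}"
  shows "norm (exp z - 1) \<le> exp (norm z) - 1"
proof -
  have "(\<lambda>n. z ^ Suc n /\<^sub>R fact (Suc n)) sums (exp z - 1)"
    using exp_converges[of z] sums_Suc_iff[of "\<lambda>n. z ^ n /\<^sub>R fact n" "exp z - 1"] by simp
  moreover have "(\<lambda>n. norm (z ^ Suc n /\<^sub>R fact (Suc n))) sums (exp (norm z) - 1)"
    using exp_converges[of "norm z"] sums_Suc_iff[of "\<lambda>n. norm z ^ n /\<^sub>R fact n" "exp (norm z) - 1"]
    by (simp add: norm_mult norm_power)
  ultimately show ?thesis
    by (metis sums_unique summable_norm sums_summable)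
qed

lemma exp_one_fifth_le: "exp (1/5 :: real) \<le> 5/4"
proof -
  have "exp (1/5 :: real) ^ 5 = exp 1"
    by (simp add: exp_of_nat_mult[symmetric])
  also have "\<dots> \<le> 3"
    by (rule exp_le)
  also have "\<dots> \<le> (5/4) ^ 5"
    by (simp add: power_numeral_reduce)
  finally show ?thesis
    by simp
qed

lemma norm_exp_sum_diff_le:
  fixes c \<alpha> :: "'i \<Rightarrow> real" and t :: real and \<tau> :: complex
  assumes "\<And>k. k \<in> K \<Longrightarrow> c k \<ge> 0"
    and "\<And>k. k \<in> K \<Longrightarrow> \<bar>\<alpha> k\<bar> \<le> \<omega>"
  shows "norm ((\<Sum>k\<in>K. of_real (c k) * exp (of_real (\<alpha> k) * \<tau>)) - of_real (\<Sum>k\<in>K. c k * exp (\<alpha> k * t)))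
           \<le> (exp (\<omega> * norm (\<tau> - of_real t)) - 1) * (\<Sum>k\<in>K. c k * exp (\<alpha> k * t))"
proof -
  let ?d = "\<tau> - of_real t"
  have term_diff: "of_real (c k) * exp (of_real (\<alpha> k) * \<tau>) - of_real (c k * exp (\<alpha> k * t))
      = of_real (c k * exp (\<alpha> k * t)) * (exp (of_real (\<alpha> k) * ?d) - 1)" for k
    by (simp add: exp_of_real[symmetric] exp_add[symmetric] algebra_simps)
  have "norm (of_real (c k) * exp (of_real (\<alpha> k) * \<tau>) - of_real (c k * exp (\<alpha> k * t)))
      \<le> (exp (\<omega> * norm ?d) - 1) * (c k * exp (\<alpha> k * t))" if k: "k \<in> K" for k
  proof -
    have "norm (exp (of_real (\<alpha> k) * ?d) - 1) \<le> exp (\<bar>\<alpha> k\<bar> * norm ?d) - 1"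
      using norm_exp_minus_one_le[of "of_real (\<alpha> k) * ?d"] by (simp add: norm_mult)
    also have "\<dots> \<le> exp (\<omega> * norm ?d) - 1"
      using assms(2)[OF k] by (simp add: mult_right_mono)
    finally have "norm (exp (of_real (\<alpha> k) * ?d) - 1) \<le> exp (\<omega> * norm ?d) - 1" .
    moreover have "norm (of_real (c k * exp (\<alpha> k * t)) :: complex) = c k * exp (\<alpha> k * t)"
      using assms(1)[OF k] by (simp add: norm_mult)
    ultimately show ?thesis
      unfolding term_diff norm_mult using assms(1)[OF k]
      by (simp add: mult.commute mult_left_mono)
  qed
  then show ?thesis
    by (auto simp: sum_subtractf[symmetric] sum_distrib_left
        intro!: order_trans[OF norm_sum] sum_mono)
qed

theorem lemma3p8:
  fixes m :: nat and c \<alpha> :: "nat \<Rightarrow> real" and \<omega> t :: real and \<tau> :: complex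
    and P :: "complex \<Rightarrow> complex"
  assumes P_def: "\<And>z. P z = (\<Sum>k\<le>m. complex_of_real (c k) * exp (complex_of_real (\<alpha> k) * z))"
    and c_nonneg: "\<And>k. k \<le> m \<Longrightarrow> c k \<ge> 0"
    and width: "\<And>k. k \<le> m \<Longrightarrow> \<bar>\<alpha> k\<bar> \<le> \<omega>"
    and omega_pos: "\<omega> > 0"
    and close: "cmod (\<tau> - complex_of_real t) \<le> 1 / (5 * \<omega>)"
  shows "3/4 * Re (P (complex_of_real t)) \<le> cmod (P \<tau>)
         \<and> cmod (P \<tau>) \<le> 5/4 * Re (P (complex_of_real t))"
proof -
  define S where "S = (\<Sum>k\<le>m. c k * exp (\<alpha> k * t))"
  have S_nonneg: "S \<ge> 0"
    unfolding S_def using c_nonneg by (intro sum_nonneg) auto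
  have P_t: "P (of_real t) = of_real S"
    unfolding P_def S_def by (simp add: exp_of_real[symmetric])
  have "\<omega> * cmod (\<tau> - of_real t) \<le> 1/5"
    using close omega_pos by (simp add: field_simps)
  then have "exp (\<omega> * cmod (\<tau> - of_real t)) \<le> exp (1/5)"
    by simp
  then have "exp (\<omega> * cmod (\<tau> - of_real t)) - 1 \<le> 1/4"
    using exp_one_fifth_le by linarith
  moreover have "cmod (P \<tau> - of_real S) \<le> (exp (\<omega> * cmod (\<tau> - of_real t)) - 1) * S"
    unfolding P_def S_def by (rule norm_exp_sum_diff_le) (simp_all add: c_nonneg width)
  ultimately have "cmod (P \<tau> - of_real S) \<le> 1/4 * S"
    using S_nonneg by (meson mult_right_mono order_trans)
  moreover have "cmod (of_real S) - cmod (P \<tau> - of_real S) \<le> cmod (P \<tau>)"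
    and "cmod (P \<tau>) \<le> cmod (of_real S) + cmod (P \<tau> - of_real S)"
    using norm_triangle_ineq2[of "of_real S" "P \<tau>"] norm_triangle_ineq[of "of_real S" "P \<tau> - of_real S"]
    by (simp_all add: norm_minus_commute)
  ultimately show ?thesis
    using P_t S_nonneg by auto
qed

end
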